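(* Let $V$ be a finite-dimensional vector space over a field of characteristic $\neq2$ and let $\mathcal S\subseteq V$. Let $\mathcal H'\neq\mathcal H''$ be two distinct linear hyperplanes of $V$ such that $\mathcal S'=\mathcal S\cap\mathcal H'$ is perfect in $\mathcal H'$ and $\mathcal S''=\mathcal S\cap\mathcal H''$ is perfect in $\mathcal H''$. Suppose moreover that $\mathcal S\setminus(\mathcal S'\cup\mathcal S'')$ is non-empty. Then $\mathcal S$ is perfect in $V$.
   Context: A subset $\mathcal P$ of a vector space $W$ of finite dimension $n$ over a field of characteristic $\neq2$ is perfect (in $W$) if $\{v\otimes v\}_{v\in\mathcal P}$ spans the $\binom{n+1}{2}$-dimensional space of all symmetric tensors in $W\otimes W$. *)

theory Defs
  imports "HOL-Analysis.Analysis"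
begin

text \<open>Vectors of an n-dimensional space over a field 'a are 'a^'n; tensors in
  V \<otimes> V are represented in coordinates as 'a^('n \<times> 'n).\<close>

definition tensor :: "'a::field ^ 'n::finite \<Rightarrow> 'a ^ 'n \<Rightarrow> 'a ^ ('n \<times> 'n)" where
  "tensor v w = (\<chi> p. v $ fst p * w $ snd p)"

definition tswap :: "'a::field ^ ('n::finite \<times> 'n) \<Rightarrow> 'a ^ ('n \<times> 'n)" where
  "tswap T = (\<chi> p. T $ (snd p, fst p))"

text \<open>The symmetric tensors of W \<otimes> W, for a subspace W of V (W \<otimes> W viewed inside V \<otimes> V).\<close>
definition sym_tensors :: "('a::field ^ 'n::finite) set \<Rightarrow> ('a ^ ('n \<times> 'n)) set" where
  "sym_tensors W = {T \<in> vec.span {tensor w w' | w w'. w \<in> W \<and> w' \<in> W}. tswap T = T}"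

definition perfect_in :: "('a::field ^ 'n::finite) set \<Rightarrow> ('a ^ 'n) set \<Rightarrow> bool" where
  "perfect_in P W \<longleftrightarrow> P \<subseteq> W \<and> vec.span {tensor v v | v. v \<in> P} = sym_tensors W"

definition linear_hyperplane :: "('a::field ^ 'n::finite) set \<Rightarrow> bool" where
  "linear_hyperplane H \<longleftrightarrow> vec.subspace H \<and> vec.dim H = CARD('n) - 1"

end

theory Submission
  imports Defs
begin

text \<open>Let \<open>A\<close> be the span of the squares \<open>v \<otimes> v\<close>, \<open>v \<in> S\<close>. Perfection of \<open>S \<inter> H'\<close> and
  \<open>S \<inter> H''\<close> puts \<open>h \<otimes> h\<close> into \<open>A\<close> for every \<open>h \<in> H' \<union> H''\<close>, and a vector \<open>v \<in> S\<close> outside both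
  hyperplanes contributes \<open>v \<otimes> v\<close>. For \<open>h \<in> H' - H''\<close> some \<open>h - c v\<close> with \<open>c \<noteq> 0\<close> lies in \<open>H''\<close>;
  expanding its square shows that the mixed term \<open>h \<otimes> v + v \<otimes> h\<close> lies in \<open>A\<close>, and since this
  term is linear in \<open>h\<close> and \<open>H' - H''\<close> spans \<open>H'\<close>, it lies in \<open>A\<close> for all \<open>h \<in> H'\<close>. As every
  vector is \<open>h + c v\<close> with \<open>h \<in> H'\<close>, all squares lie in \<open>A\<close>; in characteristic \<open>\<noteq> 2\<close> the
  squares span the symmetric tensors by polarization.\<close>

lemma tswap_tensor: "tswap (tensor v w) = tensor w v"
  by (simp add: tswap_def tensor_def vec_eq_iff mult.commute)

lemma tensor_axis: "tensor (axis i 1) (axis j 1) = (axis (i, j) 1 :: 'a::field ^ ('n::finite \<times> 'n))"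
  by (auto simp: tensor_def axis_def vec_eq_iff)

lemma tensor_polarization:
  "tensor v w + tensor w v = tensor (v + w) (v + w) - tensor v v - tensor w w"
  by (simp add: tensor_def vec_eq_iff algebra_simps)

lemma tensor_square_add_scale:
  "tensor (h + c *s v) (h + c *s v) = tensor h h + c *s (tensor h v + tensor v h) + (c * c) *s tensor v v"
  by (simp add: tensor_def vec_eq_iff algebra_simps)

lemma tswap_eq_sum_axis_swap:
  "tswap T = (\<Sum>p\<in>UNIV. T $ p *s axis (prod.swap p) 1)"
proof -
  have "(\<Sum>p\<in>UNIV. T $ p *s axis (prod.swap p) 1) = (\<Sum>q\<in>UNIV. T $ prod.swap q *s axis q 1)"
    by (rule sum.reindex_bij_witness[of _ prod.swap prod.swap]) auto
  also have "\<dots> = tswap T"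
    using basis_expansion[of "tswap T"] by (simp add: tswap_def prod.swap_def)
  finally show ?thesis ..
qed

lemma sym_tensors_subspace: "vec.subspace (sym_tensors W)"
  unfolding vec.subspace_def sym_tensors_def tswap_def
  by (auto simp: vec_eq_iff vec.span_zero vec.span_add vec.span_scale)

lemma tensor_square_in_sym_tensors: "w \<in> W \<Longrightarrow> tensor w w \<in> sym_tensors W"
  unfolding sym_tensors_def by (auto simp: tswap_tensor intro: vec.span_base)

lemma perfect_in_tensor_square:
  "perfect_in P W \<Longrightarrow> w \<in> W \<Longrightarrow> tensor w w \<in> vec.span {tensor v v | v. v \<in> P}"
  unfolding perfect_in_def using tensor_square_in_sym_tensors by blast

lemma sym_tensors_UNIV_subset_span_squares:
  assumes "(2::'a::field) \<noteq> 0"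
  shows "sym_tensors (UNIV :: ('a ^ 'n::finite) set) \<subseteq> vec.span (range (\<lambda>v. tensor v v))"
proof
  fix T :: "'a ^ ('n \<times> 'n)"
  assume "T \<in> sym_tensors UNIV"
  then have "tswap T = T" by (simp add: sym_tensors_def)
  have axis_sym: "axis p 1 + axis (prod.swap p) 1 \<in> vec.span (range (\<lambda>v. tensor v v))"
    for p :: "'n \<times> 'n"
    by (cases p) (simp add: tensor_axis[symmetric] tensor_polarization
        vec.span_diff vec.span_base)
  have "T + tswap T = (\<Sum>p\<in>UNIV. T $ p *s (axis p 1 + axis (prod.swap p) 1))"
    by (simp add: tswap_eq_sum_axis_swap vector_add_ldistrib sum.distrib basis_expansion)
  then have "(1 / 2) *s (T + tswap T) \<in> vec.span (range (\<lambda>v. tensor v v))"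
    by (simp only:) (intro vec.span_scale vec.span_sum axis_sym)
  moreover have "(1 / 2) *s (T + tswap T) = T"
    using \<open>tswap T = T\<close> assms by (simp add: vec_eq_iff field_simps)
  ultimately show "T \<in> vec.span (range (\<lambda>v. tensor v v))" by simp
qed

lemma perfect_in_UNIV_if_tensor_squares:
  assumes "(2::'a::field) \<noteq> 0"
    and squares: "\<And>x :: 'a ^ 'n::finite. tensor x x \<in> vec.span {tensor v v | v. v \<in> P}"
  shows "perfect_in P UNIV"
proof -
  have "vec.span {tensor v v | v. v \<in> P} \<subseteq> sym_tensors UNIV"
    by (rule vec.span_minimal[OF _ sym_tensors_subspace]) (auto intro: tensor_square_in_sym_tensors)
  moreover have "vec.span (range (\<lambda>v. tensor v v)) \<subseteq> vec.span {tensor v v | v. v \<in> P}"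
    by (rule vec.span_minimal) (use squares in auto)
  ultimately show ?thesis
    using sym_tensors_UNIV_subset_span_squares[OF assms(1)] unfolding perfect_in_def by blast
qed

lemma linear_hyperplane_decompose:
  assumes H: "linear_hyperplane (H :: ('a::field ^ 'n::finite) set)" and "v \<notin> H"
  obtains c where "x - c *s v \<in> H"
proof -
  have "vec.subspace H" and dim: "vec.dim H = CARD('n) - 1"
    using H by (auto simp: linear_hyperplane_def)
  then have span_H: "vec.span H = H"
    by (simp add: vec.span_eq_iff)
  have "vec.dim (insert v H) = CARD('n)"
    using dim \<open>v \<notin> H\<close> by (simp add: vec.dim_insert span_H)
  then have "vec.span (insert v H) = UNIV"
    using vec.dim_eq_full[of "insert v H"] by (simp add: card_cart_basis vec.dimension_def)
  then obtain c where "x - c *s v \<in> vec.span H"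
    using vec.span_breakdown_eq by blast
  with span_H that show ?thesis by metis
qed

lemma linear_hyperplanes_not_subset:
  assumes "linear_hyperplane H'" "linear_hyperplane H''" "H' \<noteq> H''"
  shows "\<not> H' \<subseteq> H''"
proof
  assume "H' \<subseteq> H''"
  with assms have "H' = H''"
    by (intro vec.subspace_dim_equal) (auto simp: linear_hyperplane_def)
  with assms(3) show False ..
qed

lemma mixed_tensor_in_subspace:
  fixes A :: "('a::field ^ ('n::finite \<times> 'n)) set"
  assumes A: "vec.subspace A"
    and H': "linear_hyperplane H'" and H'': "linear_hyperplane H''" and "H' \<noteq> H''"
    and "v \<notin> H''" and "tensor v v \<in> A"
    and squares': "\<And>h. h \<in> H' \<Longrightarrow> tensor h h \<in> A"
    and squares'': "\<And>h. h \<in> H'' \<Longrightarrow> tensor h h \<in> A"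
    and "h \<in> H'"
  shows "tensor h v + tensor v h \<in> A"
proof -
  have off_H'': "tensor h v + tensor v h \<in> A" if "h \<in> H'" "h \<notin> H''" for h
  proof -
    obtain c where m: "h - c *s v \<in> H''"
      using linear_hyperplane_decompose[OF H'' \<open>v \<notin> H''\<close>] .
    with \<open>h \<notin> H''\<close> have "c \<noteq> 0" by auto
    have "tensor h h \<in> A" "tensor (h - c *s v) (h - c *s v) \<in> A"
      using m \<open>h \<in> H'\<close> squares' squares'' by auto
    then have "(1 / c) *s (tensor h h - tensor (h - c *s v) (h - c *s v) + (c * c) *s tensor v v) \<in> A"
      using A \<open>tensor v v \<in> A\<close> by (intro vec.subspace_scale vec.subspace_add vec.subspace_diff)
    moreover have "(1 / c) *s (tensor h h - tensor (h - c *s v) (h - c *s v) + (c * c) *s tensor v v)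
        = tensor h v + tensor v h"
      using \<open>c \<noteq> 0\<close> by (simp add: tensor_def vec_eq_iff field_simps)
    ultimately show ?thesis by simp
  qed
  show ?thesis
  proof (cases "h \<in> H''")
    case True
    obtain w where w: "w \<in> H'" "w \<notin> H''"
      using linear_hyperplanes_not_subset[OF H' H'' \<open>H' \<noteq> H''\<close>] by blast
    have "vec.subspace H'" "vec.subspace H''"
      using H' H'' by (auto simp: linear_hyperplane_def)
    then have "h + w \<in> H'" "h + w \<notin> H''"
      using \<open>h \<in> H'\<close> True w vec.subspace_add vec.subspace_diff[of H'' "h + w" h]
      by auto
    then have "(tensor (h + w) v + tensor v (h + w)) - (tensor w v + tensor v w) \<in> A"
      using A w by (intro vec.subspace_diff off_H'')
    moreover have "(tensor (h + w) v + tensor v (h + w)) - (tensor w v + tensor v w)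
        = tensor h v + tensor v h"
      by (simp add: tensor_def vec_eq_iff algebra_simps)
    ultimately show ?thesis by simp
  qed (use \<open>h \<in> H'\<close> off_H'' in blast)
qed

lemma tensor_squares_from_two_hyperplanes:
  fixes A :: "('a::field ^ ('n::finite \<times> 'n)) set"
  assumes A: "vec.subspace A"
    and H': "linear_hyperplane H'" and H'': "linear_hyperplane H''" and "H' \<noteq> H''"
    and "v \<notin> H'" "v \<notin> H''" and "tensor v v \<in> A"
    and squares': "\<And>h. h \<in> H' \<Longrightarrow> tensor h h \<in> A"
    and squares'': "\<And>h. h \<in> H'' \<Longrightarrow> tensor h h \<in> A"
  shows "tensor x x \<in> A"
proof -
  obtain c where "x - c *s v \<in> H'"
    using linear_hyperplane_decompose[OF H' \<open>v \<notin> H'\<close>] .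
  moreover define h where "h = x - c *s v"
  ultimately have hh: "tensor h h \<in> A" and hv: "tensor h v + tensor v h \<in> A"
    using squares' mixed_tensor_in_subspace[OF A H' H'' \<open>H' \<noteq> H''\<close> \<open>v \<notin> H''\<close>
        \<open>tensor v v \<in> A\<close> squares' squares''] by blast+
  have "tensor h h + c *s (tensor h v + tensor v h) + (c * c) *s tensor v v \<in> A"
    using vec.subspace_add[OF A vec.subspace_add[OF A hh vec.subspace_scale[OF A hv, of c]]
        vec.subspace_scale[OF A \<open>tensor v v \<in> A\<close>, of "c * c"]] .
  then show ?thesis
    using tensor_square_add_scale[of h c v] by (simp add: h_def)
qed

theorem proposition2p3:
  fixes S H' H'' :: "('a::field ^ 'n::finite) set"
  assumes "(2::'a) \<noteq> 0"
    and "linear_hyperplane H'" and "linear_hyperplane H''" and "H' \<noteq> H''"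
    and "perfect_in (S \<inter> H') H'" and "perfect_in (S \<inter> H'') H''"
    and "S - ((S \<inter> H') \<union> (S \<inter> H'')) \<noteq> {}"
  shows "perfect_in S UNIV"
proof (rule perfect_in_UNIV_if_tensor_squares[OF assms(1)])
  let ?A = "vec.span {tensor v v | v. v \<in> S}"
  have squares: "tensor h h \<in> ?A" if "perfect_in (S \<inter> H) H" "h \<in> H" for H h
  proof -
    have "vec.span {tensor v v | v. v \<in> S \<inter> H} \<subseteq> ?A"
      by (rule vec.span_mono) blast
    with perfect_in_tensor_square[OF that] show ?thesis ..
  qed
  obtain v where "v \<in> S" and v: "v \<notin> H'" "v \<notin> H''"
    using assms(7) by blast
  then have "tensor v v \<in> ?A"
    by (auto intro: vec.span_base)
  then show "tensor x x \<in> ?A" for x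
    by (rule tensor_squares_from_two_hyperplanes[OF vec.subspace_span assms(2-4) v _
          squares[OF assms(5)] squares[OF assms(6)]])
qed

end
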